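(* Let $\theta$ be a positive integer, let $\lambda\in\mathbb{R}\setminus\{0\}$, and let $G$ be a baseline cumulative distribution function. Let $N_1,\dots,N_\theta$ be i.i.d. geometric random variables with $P(N_i=n)=p(1-p)^{n-1}$, $n=1,2,\dots$, for some $p\in(0,1]$. For each $i=1,\dots,\theta$ let $T_{i1},T_{i2},\dots$ be i.i.d. random variables with the Poisson-G distribution, i.e. with survival function $$\bar G^{PG}(t;\lambda)=\frac{e^{-\lambda G(t)}-e^{-\lambda}}{1-e^{-\lambda}},$$ where all the $T_{ij}$ and all the $N_i$ are mutually independent. Put $W_i=\min(T_{i1},\dots,T_{iN_i})$ and $V_i=\max(T_{i1},\dots,T_{iN_i})$. Then: (i) if $0<\alpha\le 1$ and $p=\alpha$, the random variable $\min_{1\le i\le\theta} W_i$ has the $\mathrm{GMOP\text{-}G}(\theta,\alpha,\lambda)$ distribution; (ii) if $\alpha>1$ and $p=1/\alpha$, the random variable $\min_{1\le i\le\theta} V_i$ has the $\mathrm{GMOP\text{-}G}(\theta,\alpha,\lambda)$ distribution.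
   Context: The generalized Marshall–Olkin Poisson-G distribution $\mathrm{GMOP\text{-}G}(\theta,\alpha,\lambda)$ with baseline cdf $G$, parameters $\theta>0$, $\alpha>0$ (write $\bar\alpha=1-\alpha$) and $\lambda\in\mathbb{R}\setminus\{0\}$, is the distribution with survival function $$\bar F(t;\theta,\alpha,\lambda)=\left[\frac{\alpha\left(e^{-\lambda G(t)}-e^{-\lambda}\right)}{1-\alpha e^{-\lambda}-\bar\alpha e^{-\lambda G(t)}}\right]^{\theta}.$$ *)

theory Defs
  imports "HOL-Probability.Probability"
begin

definition PG_surv :: "(real \<Rightarrow> real) \<Rightarrow> real \<Rightarrow> real \<Rightarrow> real" where
  "PG_surv G lam t = (exp (- lam * G t) - exp (- lam)) / (1 - exp (- lam))"

definition GMOP_surv :: "(real \<Rightarrow> real) \<Rightarrow> real \<Rightarrow> real \<Rightarrow> real \<Rightarrow> real \<Rightarrow> real" where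
  "GMOP_surv G theta alpha lam t =
     ((alpha * (exp (- lam * G t) - exp (- lam))) /
      (1 - alpha * exp (- lam) - (1 - alpha) * exp (- lam * G t))) powr theta"

definition is_cdf :: "(real \<Rightarrow> real) \<Rightarrow> bool" where
  "is_cdf G \<longleftrightarrow> mono G \<and> (\<forall>x. continuous (at_right x) G)
      \<and> (G \<longlongrightarrow> 0) at_bot \<and> (G \<longlongrightarrow> 1) at_top"

definition joint_family ::
  "(nat \<Rightarrow> 'a \<Rightarrow> nat) \<Rightarrow> (nat \<Rightarrow> nat \<Rightarrow> 'a \<Rightarrow> real) \<Rightarrow> nat + (nat \<times> nat) \<Rightarrow> 'a \<Rightarrow> real" where
  "joint_family N T k = (case k of Inl i \<Rightarrow> (\<lambda>\<omega>. real (N i \<omega>)) | Inr (i, j) \<Rightarrow> T i j)"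

definition joint_index :: "nat \<Rightarrow> (nat + (nat \<times> nat)) set" where
  "joint_index theta = Inl ` {..<theta} \<union> Inr ` ({..<theta} \<times> {1..})"

end

theory Submission
  imports Defs
begin

text \<open>
  Write \<open>mo_transform a s = a s / (1 - (1 - a) s)\<close> for the Marshall-Olkin transform.
  Given \<open>N\<^sub>i = n\<close>, the block minimum \<open>W\<^sub>i\<close> exceeds \<open>t\<close> iff all of \<open>T\<^sub>i\<^sub>1, \<dots>, T\<^sub>i\<^sub>n\<close> do,
  which has probability \<open>p (1 - p)\<^bsup>n-1\<^esup> S(t)\<^sup>n\<close>; summing this geometric series gives
  \<open>mo_transform p (S t)\<close>. Dually \<open>P(V\<^sub>i \<le> t) = mo_transform p (1 - S t)\<close>, and for \<open>p = 1/\<alpha>\<close>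
  the complement of this is \<open>mo_transform \<alpha> (S t)\<close>. The blocks \<open>(N\<^sub>i, T\<^sub>i\<^sub>1, T\<^sub>i\<^sub>2, \<dots>)\<close> are
  disjoint subfamilies of an independent family, so the \<open>W\<^sub>i\<close> (resp. \<open>V\<^sub>i\<close>) are independent and
  the survival function of their minimum is the \<open>\<theta>\<close>-th power. Finally, the Marshall-Olkin
  transform of the Poisson-G survival function is the base of the GMOP-G survival function.
\<close>

definition mo_transform :: "real \<Rightarrow> real \<Rightarrow> real" where
  "mo_transform alpha s = alpha * s / (1 - (1 - alpha) * s)"

lemma mo_transform_denominator_pos:
  fixes alpha s :: real
  assumes "0 < alpha" "0 \<le> s" "s \<le> 1"
  shows "0 < 1 - (1 - alpha) * s"
proof -
  have "1 - (1 - alpha) * s = (1 - s) + alpha * s" by (simp add: algebra_simps)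
  also have "\<dots> > 0"
    using assms by (cases "s = 1") (auto intro: add_nonneg_pos add_pos_nonneg)
  finally show ?thesis .
qed

lemma mo_transform_nonneg:
  fixes alpha s :: real
  assumes "0 < alpha" "0 \<le> s" "s \<le> 1"
  shows "0 \<le> mo_transform alpha s"
  using mo_transform_denominator_pos[OF assms] assms unfolding mo_transform_def by simp

lemma mo_transform_one [simp]: "alpha \<noteq> 0 \<Longrightarrow> mo_transform alpha 1 = 1"
  by (simp add: mo_transform_def)

lemma one_minus_mo_transform_inverse:
  fixes alpha s :: real
  assumes "alpha \<noteq> 0" "1 - (1 - alpha) * s \<noteq> 0"
  shows "1 - mo_transform (1 / alpha) (1 - s) = mo_transform alpha s"
proof -
  define D where "D = 1 - (1 - alpha) * s"
  have "1 - (1 - 1 / alpha) * (1 - s) = D / alpha"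
    using assms(1) by (simp add: D_def field_simps)
  then have "mo_transform (1 / alpha) (1 - s) = (1 - s) / D"
    using assms(1) by (simp add: mo_transform_def)
  moreover have "D \<noteq> 0" using assms(2) by (simp add: D_def)
  ultimately have "1 - mo_transform (1 / alpha) (1 - s) = (D - (1 - s)) / D"
    by (simp add: field_simps)
  also have "D - (1 - s) = alpha * s" by (simp add: D_def algebra_simps)
  finally show ?thesis by (simp add: mo_transform_def D_def)
qed

lemma GMOP_surv_eq_mo_transform_PG:
  assumes "lam \<noteq> 0"
  shows "GMOP_surv G theta alpha lam t = mo_transform alpha (PG_surv G lam t) powr theta"
proof -
  define a b where "a = exp (- lam * G t)" and "b = exp (- lam)"
  have "1 - b \<noteq> 0" using assms by (simp add: b_def)
  then have "a - b = (1 - b) * PG_surv G lam t"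
    and "1 - alpha * b - (1 - alpha) * a = (1 - b) * (1 - (1 - alpha) * PG_surv G lam t)"
    by (simp_all add: PG_surv_def a_def b_def field_simps)
  with \<open>1 - b \<noteq> 0\<close> show ?thesis
    unfolding GMOP_surv_def mo_transform_def a_def[symmetric] b_def[symmetric] by simp
qed

lemma geometric_compound_sums:
  fixes p q :: real
  assumes "0 < p" "p \<le> 1" "0 \<le> q" "q \<le> 1"
  shows "(\<lambda>n. p * (1 - p) ^ n * q ^ Suc n) sums mo_transform p q"
proof -
  have "(1 - p) * q \<le> 1 - p" using assms by (simp add: mult_left_le)
  then have "norm ((1 - p) * q) < 1" using assms by simp
  then have "(\<lambda>n. (p * q) * ((1 - p) * q) ^ n) sums ((p * q) * (1 / (1 - (1 - p) * q)))"
    by (intro sums_mult geometric_sums)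
  then show ?thesis by (simp add: mo_transform_def power_mult_distrib mult_ac)
qed

lemma (in prob_space) sums_prob_Int_level_sets:
  fixes K :: "'a \<Rightarrow> nat"
  assumes "K \<in> M \<rightarrow>\<^sub>M count_space UNIV" "E \<in> events"
  shows "(\<lambda>n. prob (E \<inter> {\<omega>\<in>space M. K \<omega> = n})) sums prob E"
proof -
  have "(\<lambda>n. prob (E \<inter> {\<omega>\<in>space M. K \<omega> = n})) sums prob (\<Union>n. E \<inter> {\<omega>\<in>space M. K \<omega> = n})"
    using assms by (intro finite_measure_UNION) (auto simp: disjoint_family_on_def)
  moreover have "(\<Union>n. E \<inter> {\<omega>\<in>space M. K \<omega> = n}) = E"
    using assms(2) sets.sets_into_space by auto
  ultimately show ?thesis by simp
qed

lemma (in prob_space) prob_geometric_mixture: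
  fixes K :: "'a \<Rightarrow> nat" and p q :: real
  assumes K: "K \<in> M \<rightarrow>\<^sub>M count_space UNIV"
    and p: "0 < p" "p \<le> 1" and q: "0 \<le> q" "q \<le> 1"
    and geom: "\<And>n. n \<ge> 1 \<Longrightarrow> prob {\<omega>\<in>space M. K \<omega> = n} = p * (1 - p) ^ (n - 1)"
    and E: "E \<in> events"
    and E_level: "\<And>n. n \<ge> 1 \<Longrightarrow> prob (E \<inter> {\<omega>\<in>space M. K \<omega> = n}) = p * (1 - p) ^ (n - 1) * q ^ n"
  shows "prob E = mo_transform p q"
proof -
  txt \<open>The geometric masses already sum to 1, so the level set \<open>K = 0\<close> is null.\<close>
  have "(\<lambda>n. prob {\<omega>\<in>space M. K \<omega> = Suc n}) sums 1"
    using geometric_compound_sums[OF p, of 1] p geom by simp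
  then have "(\<lambda>n. prob {\<omega>\<in>space M. K \<omega> = n}) sums (1 + prob {\<omega>\<in>space M. K \<omega> = 0})"
    using sums_Suc_iff[of "\<lambda>n. prob {\<omega>\<in>space M. K \<omega> = n}" 1] by simp
  moreover have "(\<lambda>n. prob {\<omega>\<in>space M. K \<omega> = n}) sums 1"
    using sums_prob_Int_level_sets[OF K sets.top] by (simp add: prob_space Int_absorb1)
  ultimately have "prob {\<omega>\<in>space M. K \<omega> = 0} = 0"
    using sums_unique2 by fastforce
  moreover have "prob (E \<inter> {\<omega>\<in>space M. K \<omega> = 0}) \<le> prob {\<omega>\<in>space M. K \<omega> = 0}"
    using K by (intro finite_measure_mono) auto
  ultimately have "prob (E \<inter> {\<omega>\<in>space M. K \<omega> = 0}) = 0"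
    by (simp add: measure_le_0_iff)
  with sums_prob_Int_level_sets[OF K E]
  have "(\<lambda>n. prob (E \<inter> {\<omega>\<in>space M. K \<omega> = Suc n})) sums prob E"
    using sums_Suc_iff[of "\<lambda>n. prob (E \<inter> {\<omega>\<in>space M. K \<omega> = n})"] by simp
  moreover have "(\<lambda>n. prob (E \<inter> {\<omega>\<in>space M. K \<omega> = Suc n})) sums mo_transform p q"
    using geometric_compound_sums[OF p q] by (simp add: E_level)
  ultimately show ?thesis using sums_unique2 by blast
qed

lemma (in prob_space) prob_Min_greater_indep_vars:
  fixes X :: "'i \<Rightarrow> 'a \<Rightarrow> real"
  assumes indep: "indep_vars (\<lambda>_. borel) X I" and I: "finite I" "I \<noteq> {}"
  shows "prob {\<omega>\<in>space M. t < Min ((\<lambda>i. X i \<omega>) ` I)} = (\<Prod>i\<in>I. prob {\<omega>\<in>space M. t < X i \<omega>})"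
proof -
  have "{\<omega>\<in>space M. t < Min ((\<lambda>i. X i \<omega>) ` I)} = (\<Inter>i\<in>I. X i -` {t<..} \<inter> space M)"
    using I by auto
  also have "prob \<dots> = (\<Prod>i\<in>I. prob (X i -` {t<..} \<inter> space M))"
    using indep I by (intro indep_varsD_finite) auto
  finally show ?thesis by (simp add: vimage_def Int_def conj_commute)
qed

locale geometric_block_model = prob_space +
  fixes theta :: nat and p :: real
    and N :: "nat \<Rightarrow> 'a \<Rightarrow> nat" and T :: "nat \<Rightarrow> nat \<Rightarrow> 'a \<Rightarrow> real" and S :: "real \<Rightarrow> real"
  assumes theta_pos: "theta \<ge> 1" and p_pos: "0 < p" and p_le_1: "p \<le> 1"
    and indep: "indep_vars (\<lambda>_. borel) (joint_family N T) (joint_index theta)"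
    and geom: "\<And>i n. i < theta \<Longrightarrow> n \<ge> 1 \<Longrightarrow>
                 prob {\<omega> \<in> space M. N i \<omega> = n} = p * (1 - p) ^ (n - 1)"
    and surv: "\<And>i j t. i < theta \<Longrightarrow> j \<ge> 1 \<Longrightarrow> prob {\<omega> \<in> space M. T i j \<omega> > t} = S t"
begin

definition block :: "nat \<Rightarrow> (nat + nat \<times> nat) set" where
  "block i = insert (Inl i) (Inr ` ({i} \<times> {1..}))"

lemma joint_family_measurable: "k \<in> joint_index theta \<Longrightarrow> joint_family N T k \<in> borel_measurable M"
  using indep unfolding indep_vars_def by blast

lemma T_measurable: "i < theta \<Longrightarrow> j \<ge> 1 \<Longrightarrow> T i j \<in> borel_measurable M"
  using joint_family_measurable[of "Inr (i, j)"] by (simp add: joint_index_def joint_family_def)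

lemma N_measurable: "i < theta \<Longrightarrow> N i \<in> M \<rightarrow>\<^sub>M count_space UNIV"
proof -
  assume "i < theta"
  then have "(\<lambda>\<omega>. real (N i \<omega>)) \<in> borel_measurable M"
    using joint_family_measurable[of "Inl i"] by (simp add: joint_index_def joint_family_def)
  then have "(\<lambda>\<omega>. nat \<lfloor>real (N i \<omega>)\<rfloor>) \<in> M \<rightarrow>\<^sub>M count_space UNIV"
    by measurable
  then show ?thesis by simp
qed

lemma survival_bounds: "0 \<le> S t" "S t \<le> 1"
  using surv[of 0 1 t, symmetric] theta_pos measure_nonneg prob_le_1 by auto

text \<open>The count \<open>N i\<close> enters the joint family as the real coordinate \<open>Inl i\<close>; \<open>nat \<lfloor>_\<rfloor>\<close> recovers it.\<close>

lemma measurable_block_aggregate: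
  assumes "agg \<in> {Min, Max}"
  shows "(\<lambda>x. agg ((\<lambda>j. x (Inr (i, j))) ` {1..nat \<lfloor>x (Inl i)\<rfloor>}))
           \<in> borel_measurable (Pi\<^sub>M (block i) (\<lambda>_. borel :: real measure))"
    (is "_ \<in> borel_measurable ?P")
proof (rule measurable_compose_countable'[where I=UNIV and g="\<lambda>x. nat \<lfloor>x (Inl i)\<rfloor>"])
  fix n
  have "(\<lambda>x. x (Inr (i, j))) \<in> borel_measurable ?P" if "j \<in> {1..n}" for j
    using that by (intro measurable_component_singleton) (auto simp: block_def)
  then have "(\<lambda>x. Min ((\<lambda>j. x (Inr (i, j))) ` {1..n})) \<in> borel_measurable ?P"
    and "(\<lambda>x. Max ((\<lambda>j. x (Inr (i, j))) ` {1..n})) \<in> borel_measurable ?P"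
    by (auto intro!: borel_measurable_Min borel_measurable_Max)
  then show "(\<lambda>x. agg ((\<lambda>j. x (Inr (i, j))) ` {1..n})) \<in> borel_measurable ?P"
    using assms by auto
next
  have "(\<lambda>x. x (Inl i)) \<in> borel_measurable ?P"
    by (intro measurable_component_singleton) (simp add: block_def)
  moreover have "(\<lambda>r::real. nat \<lfloor>r\<rfloor>) \<in> borel \<rightarrow>\<^sub>M count_space UNIV"
    by measurable
  ultimately show "(\<lambda>x. nat \<lfloor>x (Inl i)\<rfloor>) \<in> ?P \<rightarrow>\<^sub>M count_space UNIV"
    by (rule measurable_compose)
qed auto

lemma indep_block_aggregates:
  assumes "agg \<in> {Min, Max}"
  shows "indep_vars (\<lambda>_. borel) (\<lambda>i \<omega>. agg ((\<lambda>j. T i j \<omega>) ` {1..N i \<omega>})) {..<theta}"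
proof -
  have "indep_vars (\<lambda>i. Pi\<^sub>M (block i) (\<lambda>_. borel))
          (\<lambda>i \<omega>. restrict (\<lambda>k. joint_family N T k \<omega>) (block i)) {..<theta}"
    by (rule indep_vars_restrict[OF indep])
       (auto simp: block_def joint_index_def disjoint_family_on_def)
  then have "indep_vars (\<lambda>_. borel)
      (\<lambda>i \<omega>. agg ((\<lambda>j. restrict (\<lambda>k. joint_family N T k \<omega>) (block i) (Inr (i, j))) `
                {1..nat \<lfloor>restrict (\<lambda>k. joint_family N T k \<omega>) (block i) (Inl i)\<rfloor>})) {..<theta}"
    by (rule indep_vars_compose2) (rule measurable_block_aggregate[OF assms])
  moreover have "agg ((\<lambda>j. restrict (\<lambda>k. joint_family N T k \<omega>) (block i) (Inr (i, j))) `
                  {1..nat \<lfloor>restrict (\<lambda>k. joint_family N T k \<omega>) (block i) (Inl i)\<rfloor>})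
      = agg ((\<lambda>j. T i j \<omega>) ` {1..N i \<omega>})" for i \<omega>
    by (auto simp: block_def joint_family_def intro!: arg_cong[where f=agg] image_cong)
  ultimately show ?thesis by simp
qed

lemma borel_measurable_block_aggregate:
  "agg \<in> {Min, Max} \<Longrightarrow> i < theta \<Longrightarrow>
    (\<lambda>\<omega>. agg ((\<lambda>j. T i j \<omega>) ` {1..N i \<omega>})) \<in> borel_measurable M"
  using indep_block_aggregates unfolding indep_vars_def by blast

lemma prob_all_in_block:
  assumes i: "i < theta" and B: "B \<in> sets borel"
    and q: "\<And>j. j \<ge> 1 \<Longrightarrow> prob (T i j -` B \<inter> space M) = q"
    and E: "E \<in> events"
    and E_level: "\<And>n. n \<ge> 1 \<Longrightarrow>
      E \<inter> {\<omega>\<in>space M. N i \<omega> = n} = {\<omega>\<in>space M. N i \<omega> = n \<and> (\<forall>j\<in>{1..n}. T i j \<omega> \<in> B)}"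
  shows "prob E = mo_transform p q"
proof (rule prob_geometric_mixture[OF N_measurable[OF i] p_pos p_le_1 _ _ geom[OF i] E])
  show "0 \<le> q" "q \<le> 1"
    using q[of 1] by auto
  fix n :: nat assume n: "n \<ge> 1"
  let ?J = "insert (Inl i) ((\<lambda>j. Inr (i, j)) ` {1..n})"
  let ?A = "\<lambda>k. case k of Inl _ \<Rightarrow> {real n} | Inr _ \<Rightarrow> B"
  have "prob (\<Inter>k\<in>?J. joint_family N T k -` ?A k \<inter> space M)
      = (\<Prod>k\<in>?J. prob (joint_family N T k -` ?A k \<inter> space M))"
    using i B by (intro indep_varsD[OF indep]) (auto simp: joint_index_def)
  moreover have "(\<Inter>k\<in>?J. joint_family N T k -` ?A k \<inter> space M) = E \<inter> {\<omega>\<in>space M. N i \<omega> = n}"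
    using E_level[OF n] by (auto simp: joint_family_def)
  moreover have "(\<Prod>k\<in>?J. prob (joint_family N T k -` ?A k \<inter> space M))
      = prob {\<omega>\<in>space M. N i \<omega> = n} * q ^ n"
    using q by (subst prod.insert) (auto simp: prod.reindex inj_on_def joint_family_def vimage_def Int_def conj_commute)
  ultimately show "prob (E \<inter> {\<omega>\<in>space M. N i \<omega> = n}) = p * (1 - p) ^ (n - 1) * q ^ n"
    using geom[OF i n] by simp
qed

lemma prob_block_Min_greater:
  assumes i: "i < theta"
  shows "prob {\<omega>\<in>space M. t < Min ((\<lambda>j. T i j \<omega>) ` {1..N i \<omega>})} = mo_transform p (S t)"
proof (rule prob_all_in_block[OF i, of "{t<..}"])
  show "prob (T i j -` {t<..} \<inter> space M) = S t" if "j \<ge> 1" for j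
    using surv[OF i that, of t] by (simp add: vimage_def Int_def conj_commute)
  show "{\<omega>\<in>space M. t < Min ((\<lambda>j. T i j \<omega>) ` {1..N i \<omega>})} \<in> events"
    using borel_measurable_block_aggregate[of Min, OF _ i] by measurable
qed auto

lemma prob_block_Max_greater:
  assumes i: "i < theta"
  shows "prob {\<omega>\<in>space M. t < Max ((\<lambda>j. T i j \<omega>) ` {1..N i \<omega>})} = 1 - mo_transform p (1 - S t)"
proof -
  have le_event: "{\<omega>\<in>space M. Max ((\<lambda>j. T i j \<omega>) ` {1..N i \<omega>}) \<le> t} \<in> events"
    using borel_measurable_block_aggregate[of Max, OF _ i] by measurable
  have "prob {\<omega>\<in>space M. Max ((\<lambda>j. T i j \<omega>) ` {1..N i \<omega>}) \<le> t} = mo_transform p (1 - S t)"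
  proof (rule prob_all_in_block[OF i _ _ le_event])
    fix j :: nat assume "j \<ge> 1"
    then have "prob (space M - {\<omega>\<in>space M. t < T i j \<omega>}) = 1 - S t"
      using surv[OF i] T_measurable[OF i] by (subst prob_compl) auto
    moreover have "T i j -` {..t} \<inter> space M = space M - {\<omega>\<in>space M. t < T i j \<omega>}" by auto
    ultimately show "prob (T i j -` {..t} \<inter> space M) = 1 - S t" by simp
  qed auto
  moreover have "{\<omega>\<in>space M. t < Max ((\<lambda>j. T i j \<omega>) ` {1..N i \<omega>})}
      = space M - {\<omega>\<in>space M. Max ((\<lambda>j. T i j \<omega>) ` {1..N i \<omega>}) \<le> t}" by auto
  ultimately show ?thesis
    using prob_compl[OF le_event] by simp
qed

lemma prob_Min_block_Min_greater:
  "prob {\<omega>\<in>space M. t < Min ((\<lambda>i. Min ((\<lambda>j. T i j \<omega>) ` {1..N i \<omega>})) ` {..<theta})}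
    = mo_transform p (S t) ^ theta"
proof -
  have "prob {\<omega>\<in>space M. t < Min ((\<lambda>i. Min ((\<lambda>j. T i j \<omega>) ` {1..N i \<omega>})) ` {..<theta})}
      = (\<Prod>i<theta. prob {\<omega>\<in>space M. t < Min ((\<lambda>j. T i j \<omega>) ` {1..N i \<omega>})})"
    using theta_pos by (intro prob_Min_greater_indep_vars indep_block_aggregates) (auto simp: lessThan_empty_iff)
  also have "\<dots> = (\<Prod>i<theta. mo_transform p (S t))"
    by (intro prod.cong refl prob_block_Min_greater) simp
  finally show ?thesis by simp
qed

lemma prob_Min_block_Max_greater:
  "prob {\<omega>\<in>space M. t < Min ((\<lambda>i. Max ((\<lambda>j. T i j \<omega>) ` {1..N i \<omega>})) ` {..<theta})}
    = (1 - mo_transform p (1 - S t)) ^ theta"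
proof -
  have "prob {\<omega>\<in>space M. t < Min ((\<lambda>i. Max ((\<lambda>j. T i j \<omega>) ` {1..N i \<omega>})) ` {..<theta})}
      = (\<Prod>i<theta. prob {\<omega>\<in>space M. t < Max ((\<lambda>j. T i j \<omega>) ` {1..N i \<omega>})})"
    using theta_pos by (intro prob_Min_greater_indep_vars indep_block_aggregates) (auto simp: lessThan_empty_iff)
  also have "\<dots> = (\<Prod>i<theta. 1 - mo_transform p (1 - S t))"
    by (intro prod.cong refl prob_block_Max_greater) simp
  finally show ?thesis by simp
qed

end

theorem proposition1:
  fixes M :: "'a measure" and theta :: nat and lam alpha p :: real
    and G :: "real \<Rightarrow> real"
    and N :: "nat \<Rightarrow> 'a \<Rightarrow> nat" and T :: "nat \<Rightarrow> nat \<Rightarrow> 'a \<Rightarrow> real"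
  assumes "prob_space M"
    and "theta \<ge> 1"
    and "lam \<noteq> 0"
    and "is_cdf G"
    and "0 < p" and "p \<le> 1"
    and indep: "prob_space.indep_vars M (\<lambda>_. borel) (joint_family N T) (joint_index theta)"
    and geom: "\<And>i n. i < theta \<Longrightarrow> n \<ge> 1 \<Longrightarrow>
                 measure M {\<omega> \<in> space M. N i \<omega> = n} = p * (1 - p) ^ (n - 1)"
    and pg: "\<And>i j t. i < theta \<Longrightarrow> j \<ge> 1 \<Longrightarrow>
                 measure M {\<omega> \<in> space M. T i j \<omega> > t} = PG_surv G lam t"
  shows
    "(0 < alpha \<and> alpha \<le> 1 \<and> p = alpha \<longrightarrow>
       (let Z = (\<lambda>\<omega>. Min ((\<lambda>i. Min ((\<lambda>j. T i j \<omega>) ` {1..N i \<omega>})) ` {..<theta}))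
        in Z \<in> borel_measurable M \<and>
           (\<forall>t. measure M {\<omega> \<in> space M. Z \<omega> > t} = GMOP_surv G (real theta) alpha lam t)))
   \<and> (alpha > 1 \<and> p = 1 / alpha \<longrightarrow>
       (let Z = (\<lambda>\<omega>. Min ((\<lambda>i. Max ((\<lambda>j. T i j \<omega>) ` {1..N i \<omega>})) ` {..<theta}))
        in Z \<in> borel_measurable M \<and>
           (\<forall>t. measure M {\<omega> \<in> space M. Z \<omega> > t} = GMOP_surv G (real theta) alpha lam t)))"
proof -
  interpret geometric_block_model M theta p N T "PG_surv G lam"
    using assms by (intro geometric_block_model.intro geometric_block_model_axioms.intro) auto
  have Z_measurable: "(\<lambda>\<omega>. Min ((\<lambda>i. agg ((\<lambda>j. T i j \<omega>) ` {1..N i \<omega>})) ` {..<theta})) \<in> borel_measurable M"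
    if "agg \<in> {Min, Max}" for agg
    using that by (intro borel_measurable_Min borel_measurable_block_aggregate) auto
  have GMOP: "GMOP_surv G (real theta) alpha lam t = mo_transform alpha (PG_surv G lam t) ^ theta"
    if "0 < alpha" for t
    using GMOP_surv_eq_mo_transform_PG[OF \<open>lam \<noteq> 0\<close>] \<open>theta \<ge> 1\<close>
      powr_realpow'[OF mo_transform_nonneg[OF that survival_bounds]] by simp
  have dual: "1 - mo_transform (1 / alpha) (1 - PG_surv G lam t) = mo_transform alpha (PG_surv G lam t)"
    if "1 < alpha" for t
    using that mo_transform_denominator_pos[of alpha "PG_surv G lam t"] survival_bounds[of t]
    by (intro one_minus_mo_transform_inverse) auto
  show ?thesis
    unfolding Let_def
  proof (intro conjI impI allI)
    fix t assume "0 < alpha \<and> alpha \<le> 1 \<and> p = alpha"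
    then show "prob {\<omega> \<in> space M. Min ((\<lambda>i. Min ((\<lambda>j. T i j \<omega>) ` {1..N i \<omega>})) ` {..<theta}) > t}
        = GMOP_surv G (real theta) alpha lam t"
      using GMOP prob_Min_block_Min_greater by simp
  next
    fix t assume "1 < alpha \<and> p = 1 / alpha"
    then show "prob {\<omega> \<in> space M. Min ((\<lambda>i. Max ((\<lambda>j. T i j \<omega>) ` {1..N i \<omega>})) ` {..<theta}) > t}
        = GMOP_surv G (real theta) alpha lam t"
      using GMOP dual prob_Min_block_Max_greater by simp
  qed (use Z_measurable in auto)
qed

end
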